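(* Let $K$ be a field, $\vartheta$ any one of the four types (left, right, pre-two-sided, two-sided), and $\mathcal A$ a $K$-algebra which is algebraic over $K$ with $\mathcal A\neq K$ (i.e., $\mathcal A\neq K\cdot 1$). Then for every proper $\vartheta$-Mathieu subspace $M$ of $\mathcal A$ there exists a maximal non-trivial $\vartheta$-Mathieu subspace of $\mathcal A$ containing $M$. In particular, $\mathcal A$ has at least one maximal non-trivial $\vartheta$-Mathieu subspace.
   Context: All algebras are associative and unital. $\mathcal A$ is algebraic over $K$ if every element is a root of a nonzero polynomial over $K$. A subspace is proper if $\neq\mathcal A$ and non-trivial if $\neq 0,\mathcal A$; a maximal non-trivial $\vartheta$-Mathieu subspace is one maximal under inclusion among non-trivial $\vartheta$-Mathieu subspaces. A $K$-subspace $V$ is a left (resp. right) Mathieu subspace if whenever $a^m\in V$ for all $m\ge1$, then for every $b\in\mathcal A$, $ba^m\in V$ (resp. $a^mb\in V$) for all sufficiently large $m$; pre-two-sided if both left and right; two-sided if whenever $a^m\in V$ for all $m\ge1$, for all $b,c\in\mathcal A$, $ba^mc\in V$ for all sufficiently large $m$. *)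

theory Defs
  imports Main "HOL-Computational_Algebra.Polynomial"
begin

definition is_K_algebra :: "('k::field \<Rightarrow> 'a::ring_1 \<Rightarrow> 'a) \<Rightarrow> bool" where
  "is_K_algebra scale \<longleftrightarrow> vector_space scale \<and>
     (\<forall>c x y. scale c (x * y) = scale c x * y) \<and>
     (\<forall>c x y. scale c (x * y) = x * scale c y)"

definition alg_eval :: "('k::field \<Rightarrow> 'a::ring_1 \<Rightarrow> 'a) \<Rightarrow> 'k poly \<Rightarrow> 'a \<Rightarrow> 'a" where
  "alg_eval scale p a = (\<Sum>i\<le>degree p. scale (coeff p i) (a ^ i))"

definition algebraic_over :: "('k::field \<Rightarrow> 'a::ring_1 \<Rightarrow> 'a) \<Rightarrow> bool" where
  "algebraic_over scale \<longleftrightarrow> (\<forall>a. \<exists>p. p \<noteq> 0 \<and> alg_eval scale p a = 0)"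

datatype mathieu_type = LeftM | RightM | PreTwoSidedM | TwoSidedM

definition left_mathieu :: "('k::field \<Rightarrow> 'a::ring_1 \<Rightarrow> 'a) \<Rightarrow> 'a set \<Rightarrow> bool" where
  "left_mathieu scale V \<longleftrightarrow> module.subspace scale V \<and>
     (\<forall>a. (\<forall>m\<ge>1. a ^ m \<in> V) \<longrightarrow> (\<forall>b. \<exists>N. \<forall>m\<ge>N. b * a ^ m \<in> V))"

definition right_mathieu :: "('k::field \<Rightarrow> 'a::ring_1 \<Rightarrow> 'a) \<Rightarrow> 'a set \<Rightarrow> bool" where
  "right_mathieu scale V \<longleftrightarrow> module.subspace scale V \<and>
     (\<forall>a. (\<forall>m\<ge>1. a ^ m \<in> V) \<longrightarrow> (\<forall>b. \<exists>N. \<forall>m\<ge>N. a ^ m * b \<in> V))"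

definition two_sided_mathieu :: "('k::field \<Rightarrow> 'a::ring_1 \<Rightarrow> 'a) \<Rightarrow> 'a set \<Rightarrow> bool" where
  "two_sided_mathieu scale V \<longleftrightarrow> module.subspace scale V \<and>
     (\<forall>a. (\<forall>m\<ge>1. a ^ m \<in> V) \<longrightarrow> (\<forall>b c. \<exists>N. \<forall>m\<ge>N. b * a ^ m * c \<in> V))"

fun mathieu :: "mathieu_type \<Rightarrow> ('k::field \<Rightarrow> 'a::ring_1 \<Rightarrow> 'a) \<Rightarrow> 'a set \<Rightarrow> bool" where
  "mathieu LeftM scale V = left_mathieu scale V"
| "mathieu RightM scale V = right_mathieu scale V"
| "mathieu PreTwoSidedM scale V = (left_mathieu scale V \<and> right_mathieu scale V)"
| "mathieu TwoSidedM scale V = two_sided_mathieu scale V"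

definition nontrivial_mathieu :: "mathieu_type \<Rightarrow> ('k::field \<Rightarrow> 'a::ring_1 \<Rightarrow> 'a) \<Rightarrow> 'a set \<Rightarrow> bool" where
  "nontrivial_mathieu t scale V \<longleftrightarrow> mathieu t scale V \<and> V \<noteq> {0} \<and> V \<noteq> UNIV"

definition maximal_nontrivial_mathieu :: "mathieu_type \<Rightarrow> ('k::field \<Rightarrow> 'a::ring_1 \<Rightarrow> 'a) \<Rightarrow> 'a set \<Rightarrow> bool" where
  "maximal_nontrivial_mathieu t scale V \<longleftrightarrow> nontrivial_mathieu t scale V \<and>
     (\<forall>W. nontrivial_mathieu t scale W \<and> V \<subseteq> W \<longrightarrow> W = V)"

end

theory Submission
  imports Defs
begin

(* Algebraicity makes Zorn's lemma applicable: if a satisfies a polynomial relation of degree d,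
   then a, ..., a^d already force every power a^m (m >= 1) into any subspace containing them.
   Hence if all powers of a lie in the union of a chain of Mathieu subspaces, they lie in one
   member, and the union is again Mathieu. Since a Mathieu subspace containing 1 is everything,
   Zorn yields N containing M, maximal among the Mathieu subspaces avoiding 1. It remains to rule
   out N = {0}, i.e. to find a nonzero two-sided Mathieu subspace avoiding 1 when A is not K:
   either some x outside K has x^2 = 0 or x^2 not in K x, and then K x works because every element
   whose powers all lie in K x squares to 0; or every x outside K has x^2 in K x, which forces
   K = F_2 and A Boolean, and then the principal ideal A x of any x outside K works. *)

lemma idempotent_ring_add_self:
  fixes x :: "'a::ring_1"
  assumes idem: "\<And>u::'a. u * u = u"
  shows "x + x = 0"
proof -
  have "x + x = (x + x) * (x + x)" by (rule idem[symmetric])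
  also have "\<dots> = x * x + x * x + (x * x + x * x)" by (simp add: ring_distribs)
  also have "\<dots> = (x + x) + (x + x)" by (simp only: idem)
  finally show ?thesis by (simp only: add_cancel_right_right)
qed

lemma idempotent_ring_commute:
  fixes x y :: "'a::ring_1"
  assumes idem: "\<And>u::'a. u * u = u"
  shows "x * y = y * x"
proof -
  have "x * x + x * y + y * x + y * y = x + y"
    using idem[of "x + y"] by (simp add: algebra_simps)
  then have "x * y + y * x = 0" by (simp add: idem algebra_simps)
  moreover have "y * x + y * x = 0" by (rule idempotent_ring_add_self[OF idem])
  ultimately have "x * y + y * x = y * x + y * x" by simp
  then show ?thesis by (simp only: add_right_cancel)
qed

lemma idempotent_ring_power:
  fixes x :: "'a::ring_1"
  assumes idem: "\<And>u::'a. u * u = u" and "m \<ge> 1"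
  shows "x ^ m = x"
  using \<open>m \<ge> 1\<close>
proof (induction m rule: dec_induct)
  case (step m)
  then show ?case by (simp add: idem)
qed simp

lemma mathieu_imp_subspace: "mathieu t scale V \<Longrightarrow> module.subspace scale V"
  by (cases t) (auto simp: left_mathieu_def right_mathieu_def two_sided_mathieu_def)

lemma two_sided_mathieu_imp_mathieu:
  assumes "two_sided_mathieu scale V"
  shows "mathieu t scale V"
proof -
  have "left_mathieu scale V" "right_mathieu scale V"
    using assms unfolding two_sided_mathieu_def left_mathieu_def right_mathieu_def
    by (metis mult.right_neutral, metis mult_1)
  then show ?thesis using assms by (cases t) auto
qed

lemma mathieu_imp_left_or_right_mathieu:
  "mathieu t scale V \<Longrightarrow> left_mathieu scale V \<or> right_mathieu scale V"
  using two_sided_mathieu_imp_mathieu[of scale V LeftM] by (cases t) auto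

lemma mathieu_UNIV_if_one:
  fixes V :: "'a::ring_1 set"
  assumes "mathieu t scale V" "1 \<in> V"
  shows "V = UNIV"
proof -
  have one_powers: "\<forall>m\<ge>1. (1::'a) ^ m \<in> V" using assms(2) by simp
  have "b \<in> V" for b
    using mathieu_imp_left_or_right_mathieu[OF assms(1)]
  proof
    assume "left_mathieu scale V"
    then obtain N where "\<forall>m\<ge>N. b * 1 ^ m \<in> V"
      using one_powers unfolding left_mathieu_def by blast
    then show "b \<in> V" by auto
  next
    assume "right_mathieu scale V"
    then obtain N where "\<forall>m\<ge>N. 1 ^ m * b \<in> V"
      using one_powers unfolding right_mathieu_def by blast
    then show "b \<in> V" by auto
  qed
  then show ?thesis by blast
qed

lemma one_notin_principal_left_ideal_idempotent:
  fixes x :: "'a::ring_1"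
  assumes idem: "\<And>u::'a. u * u = u" and "x \<noteq> 1"
  shows "1 \<notin> range (\<lambda>b. b * x)"
proof
  assume "1 \<in> range (\<lambda>b. b * x)"
  then obtain b where b: "1 = b * x" by auto
  then have "x = b * (x * x)" by (simp add: mult.assoc[symmetric])
  with b idem have "x = 1" by simp
  with assms(2) show False by contradiction
qed

locale K_algebra = vector_space scale for scale :: "'k::field \<Rightarrow> 'a::ring_1 \<Rightarrow> 'a" +
  assumes scale_mult_left: "scale c (x * y) = scale c x * y"
    and scale_mult_right: "scale c (x * y) = x * scale c y"

lemma K_algebraI: "is_K_algebra scale \<Longrightarrow> K_algebra scale"
  unfolding is_K_algebra_def K_algebra_def K_algebra_axioms_def by blast

context K_algebra
begin

abbreviation scalars :: "'a set" where
  "scalars \<equiv> range (\<lambda>c. scale c 1)"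

lemma scale_mult_scale: "scale c x * scale d y = scale (c * d) (x * y)"
  by (simp add: scale_mult_left[symmetric] scale_mult_right[symmetric])

lemma scale_eq_scalar_imp_zero:
  assumes "x \<notin> scalars" "scale \<alpha> x = scale \<beta> 1"
  shows "\<alpha> = 0"
proof (rule ccontr)
  assume "\<alpha> \<noteq> 0"
  then have "x = scale (inverse \<alpha>) (scale \<alpha> x)" by simp
  also have "\<dots> = scale (inverse \<alpha> * \<beta>) 1" using assms(2) by simp
  finally show False using assms(1) by blast
qed

lemma not_scalar_imp_nonzero: "x \<notin> scalars \<Longrightarrow> x \<noteq> 0"
  using scale_zero_left[of 1] by auto

lemma scale_not_scalar:
  assumes "x \<notin> scalars" "c \<noteq> 0"
  shows "scale c x \<notin> scalars"
proof
  assume "scale c x \<in> scalars"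
  then obtain d where "scale c x = scale d 1" by blast
  then show False using assms scale_eq_scalar_imp_zero by blast
qed

lemma one_notin_span_nonscalar:
  assumes "x \<notin> scalars"
  shows "1 \<notin> span {x}"
proof
  assume "1 \<in> span {x}"
  then obtain c where "scale c x = scale 1 1" by (auto simp: span_singleton)
  with assms show False using scale_eq_scalar_imp_zero by fastforce
qed

lemma powers_mem_subspace_from_relation:
  assumes V: "subspace V" and lead: "c d \<noteq> 0"
    and relation: "(\<Sum>i\<le>d. scale (c i) (a ^ i)) = 0"
    and initial: "\<forall>j\<in>{1..d}. a ^ j \<in> V"
    and "m \<ge> 1"
  shows "a ^ m \<in> V"
  using \<open>m \<ge> 1\<close>
proof (induction m rule: less_induct)
  case (less m)
  show ?case
  proof (cases "m \<le> d")
    case True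
    then show ?thesis using initial less.prems by auto
  next
    case False
    then obtain k where k: "m = d + k" "k \<ge> 1" by (intro that[of "m - d"]) auto
    \<comment> \<open>multiply the relation by \<open>a ^ k\<close> and solve for its top term \<open>a ^ m\<close>\<close>
    have "(\<Sum>i\<le>d. scale (c i) (a ^ (i + k))) = a ^ k * (\<Sum>i\<le>d. scale (c i) (a ^ i))"
      unfolding sum_distrib_left
      by (intro sum.cong refl) (simp add: scale_mult_right[symmetric] power_add[symmetric] add.commute)
    then have "(\<Sum>i<d. scale (c i) (a ^ (i + k))) + scale (c d) (a ^ m) = 0"
      using relation k by (simp add: lessThan_Suc_atMost[symmetric])
    then have top: "scale (c d) (a ^ m) = - (\<Sum>i<d. scale (c i) (a ^ (i + k)))"
      by (simp add: eq_neg_iff_add_eq_0 add.commute)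
    have "(\<Sum>i<d. scale (c i) (a ^ (i + k))) \<in> V"
      using k by (intro subspace_sum[OF V] subspace_scale[OF V] less.IH) auto
    then have "scale (inverse (c d)) (scale (c d) (a ^ m)) \<in> V"
      unfolding top by (intro subspace_scale[OF V] subspace_neg[OF V])
    then show ?thesis using lead by simp
  qed
qed

lemma algebraic_powers_mem_chain_member:
  assumes algebraic: "\<exists>p. p \<noteq> 0 \<and> alg_eval scale p a = 0"
    and "C \<noteq> {}" and chain: "subset.chain (Collect subspace) C"
    and powers: "\<forall>m\<ge>1. a ^ m \<in> \<Union>C"
  shows "\<exists>V\<in>C. \<forall>m\<ge>1. a ^ m \<in> V"
proof -
  obtain p where p: "p \<noteq> 0" "alg_eval scale p a = 0" using algebraic by blast
  have "(\<lambda>j. a ^ j) ` {1..degree p} \<subseteq> \<Union>C" using powers by auto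
  then obtain V where V: "V \<in> C" "(\<lambda>j. a ^ j) ` {1..degree p} \<subseteq> V"
    using finite_subset_Union_chain[OF _ _ \<open>C \<noteq> {}\<close> chain] by blast
  have "a ^ m \<in> V" if "m \<ge> 1" for m
  proof (rule powers_mem_subspace_from_relation[OF _ _ _ _ that])
    show "subspace V" using V(1) chain by (auto simp: subset_chain_def)
    show "coeff p (degree p) \<noteq> 0" using p(1) by simp
    show "(\<Sum>i\<le>degree p. scale (coeff p i) (a ^ i)) = 0" using p(2) by (simp add: alg_eval_def)
    show "\<forall>j\<in>{1..degree p}. a ^ j \<in> V" using V(2) by auto
  qed
  then show ?thesis using V(1) by blast
qed

lemma subspace_Union_chain:
  assumes "C \<noteq> {}" and chain: "subset.chain (Collect subspace) C"
  shows "subspace (\<Union>C)"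
proof (rule subspaceI)
  show "0 \<in> \<Union>C" using assms subspace_0 by (fastforce simp: subset_chain_def)
next
  fix x y assume "x \<in> \<Union>C" "y \<in> \<Union>C"
  then obtain A B where "A \<in> C" "B \<in> C" "x \<in> A" "y \<in> B" by blast
  with chain show "x + y \<in> \<Union>C"
    unfolding subset_chain_def by (metis UnionI mem_Collect_eq subsetD subspace_add)
next
  fix c x assume "x \<in> \<Union>C"
  with chain show "scale c x \<in> \<Union>C"
    unfolding subset_chain_def using subspace_scale by blast
qed

lemma mathieu_Union_chain:
  assumes algebraic: "algebraic_over scale"
    and "C \<noteq> {}" and chain: "subset.chain (Collect (mathieu t scale)) C"
  shows "mathieu t scale (\<Union>C)"
proof -
  have members: "\<forall>V\<in>C. mathieu t scale V" using chain by (auto simp: subset_chain_def)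
  then have subspaces: "subset.chain (Collect subspace) C"
    using chain mathieu_imp_subspace by (fastforce simp: subset_chain_def)
  have union: "subspace (\<Union>C)" by (rule subspace_Union_chain[OF \<open>C \<noteq> {}\<close> subspaces])
  have powers: "\<exists>V\<in>C. \<forall>m\<ge>1. a ^ m \<in> V" if "\<forall>m\<ge>1. a ^ m \<in> \<Union>C" for a
    using algebraic_powers_mem_chain_member[OF _ \<open>C \<noteq> {}\<close> subspaces that] algebraic
    unfolding algebraic_over_def by blast
  have lift: "\<forall>a. (\<forall>m\<ge>1. a ^ m \<in> \<Union>C) \<longrightarrow> (\<forall>b. \<exists>N. \<forall>m\<ge>N. f b a m \<in> \<Union>C)"
    if "\<forall>V\<in>C. \<forall>a. (\<forall>m\<ge>1. a ^ m \<in> V) \<longrightarrow> (\<forall>b. \<exists>N. \<forall>m\<ge>N. f b a m \<in> V)"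
    for f :: "'b \<Rightarrow> 'a \<Rightarrow> nat \<Rightarrow> 'a"
    using that powers by (meson UnionI)
  show ?thesis
  proof (cases t)
    case LeftM
    then show ?thesis using members union lift[of "\<lambda>b a m. b * a ^ m"]
      by (simp add: left_mathieu_def)
  next
    case RightM
    then show ?thesis using members union lift[of "\<lambda>b a m. a ^ m * b"]
      by (simp add: right_mathieu_def)
  next
    case PreTwoSidedM
    then show ?thesis using members union lift[of "\<lambda>b a m. b * a ^ m"] lift[of "\<lambda>b a m. a ^ m * b"]
      by (simp add: left_mathieu_def right_mathieu_def)
  next
    case TwoSidedM
    then show ?thesis using members union lift[of "\<lambda>(b, c) a m. b * a ^ m * c"]
      by (simp add: two_sided_mathieu_def)
  qed
qed

lemma two_sided_mathieu_span_nonscalar: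
  assumes "x \<notin> scalars" and square: "x * x = 0 \<or> x * x \<notin> span {x}"
  shows "two_sided_mathieu scale (span {x})"
  unfolding two_sided_mathieu_def
proof (intro conjI allI impI subspace_span)
  fix a b c assume powers: "\<forall>m\<ge>1. a ^ m \<in> span {x}"
  obtain d where d: "a = scale d x" using powers[rule_format, of 1] by (auto simp: span_singleton)
  have "a * a \<in> span {x}" using powers[rule_format, of 2] by (simp add: power2_eq_square)
  have square_zero: "a * a = 0"
  proof (cases "d = 0")
    case False
    have aa: "a * a = scale (d * d) (x * x)" using d scale_mult_scale by simp
    show ?thesis
      using square
    proof
      assume "x * x \<notin> span {x}"
      moreover have "x * x = scale (inverse (d * d)) (a * a)" using aa False by (simp add: field_simps)
      ultimately show ?thesis using \<open>a * a \<in> span {x}\<close> span_scale by metis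
    qed (use aa in simp)
  qed (use d in simp)
  have "b * a ^ m * c = 0" if "m \<ge> 2" for m
  proof -
    have "a ^ m = a ^ (m - 2) * (a * a)"
      using that by (metis le_add_diff_inverse2 power_add power2_eq_square)
    then show ?thesis using square_zero by simp
  qed
  then show "\<exists>N. \<forall>m\<ge>N. b * a ^ m * c \<in> span {x}"
    using span_zero by (intro exI[of _ 2]) auto
qed

lemma square_eq_neg_if_squares_in_span:
  assumes squares: "\<forall>x. x \<notin> scalars \<longrightarrow> x * x \<in> span {x}" and "y \<notin> scalars"
  shows "y * y = - y"
proof -
  obtain l where l: "y * y = scale l y" using squares \<open>y \<notin> scalars\<close> by (auto simp: span_singleton)
  have "y + 1 \<notin> scalars"
  proof
    assume "y + 1 \<in> scalars"
    then obtain c where "y + 1 = scale c 1" by auto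
    then have "y = scale (c - 1) 1" by (simp add: scale_left_diff_distrib eq_diff_eq)
    with \<open>y \<notin> scalars\<close> show False by blast
  qed
  then obtain \<mu> where \<mu>: "(y + 1) * (y + 1) = scale \<mu> (y + 1)"
    using squares by (auto simp: span_singleton)
  \<comment> \<open>compare coefficients of \<open>y\<close> and \<open>1\<close>, which are linearly independent\<close>
  have "(y + 1) * (y + 1) = y * y + y + y + 1" by (simp add: algebra_simps)
  moreover have "scale 2 y = y + y" using scale_left_distrib[of 1 1 y] by simp
  ultimately have "scale (l + 1 + 1 - \<mu>) y = scale (\<mu> - 1) 1"
    using \<mu> l by (simp add: algebra_simps scale_left_distrib scale_right_distrib)
  moreover from this have coeff_y: "l + 1 + 1 - \<mu> = 0"
    using scale_eq_scalar_imp_zero[OF \<open>y \<notin> scalars\<close>] by blast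
  ultimately have "\<mu> = 1" by simp
  with coeff_y have "l = - 1" by (simp add: algebra_simps eq_neg_iff_add_eq_0)
  with l show ?thesis by simp
qed

lemma nonzero_scalar_eq_one_if_squares_in_span:
  fixes c :: 'k
  assumes squares: "\<forall>x. x \<notin> scalars \<longrightarrow> x * x \<in> span {x}"
    and "x \<notin> scalars" and "c \<noteq> 0"
  shows "c = 1"
proof -
  have "scale (c * c) (x * x) = - scale c x"
    using square_eq_neg_if_squares_in_span[OF squares scale_not_scalar[OF assms(2,3)]]
    by (simp add: scale_mult_scale)
  then have "scale (c * c) x = scale c x"
    using square_eq_neg_if_squares_in_span[OF squares \<open>x \<notin> scalars\<close>] by simp
  then have "c * c = c" using not_scalar_imp_nonzero[OF \<open>x \<notin> scalars\<close>] by simp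
  with \<open>c \<noteq> 0\<close> show ?thesis by simp
qed

lemma idempotent_if_squares_in_span:
  fixes u :: 'a
  assumes squares: "\<forall>x. x \<notin> scalars \<longrightarrow> x * x \<in> span {x}" and "scalars \<noteq> UNIV"
  shows "u * u = u"
proof -
  obtain x where "x \<notin> scalars" using \<open>scalars \<noteq> UNIV\<close> by blast
  note scalar_01 = nonzero_scalar_eq_one_if_squares_in_span[OF squares this]
  have "(1::'k) + 1 = 0"
  proof (rule ccontr)
    assume "(1::'k) + 1 \<noteq> 0"
    then have "(1::'k) + 1 = 1" by (rule scalar_01)
    then show False by (simp only: add_cancel_left_right one_neq_zero)
  qed
  then have minus_self: "- v = v" for v :: 'a
    using scale_left_distrib[of 1 1 v] by (simp add: neg_eq_iff_add_eq_0)
  show ?thesis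
  proof (cases "u \<in> scalars")
    case True
    then obtain c where "u = scale c 1" by blast
    with scalar_01[of c] show ?thesis by (cases "c = 0") auto
  next
    case False
    with square_eq_neg_if_squares_in_span[OF squares] minus_self show ?thesis by simp
  qed
qed

lemma two_sided_mathieu_principal_left_ideal_idempotent:
  assumes idem: "\<And>u::'a. u * u = u"
  shows "two_sided_mathieu scale (range (\<lambda>b. b * x))"
  unfolding two_sided_mathieu_def
proof (intro conjI allI impI)
  show "subspace (range (\<lambda>b. b * x))"
  proof (rule subspaceI)
    show "0 \<in> range (\<lambda>b. b * x)" by (rule range_eqI[of _ _ 0]) simp
    show "u + v \<in> range (\<lambda>b. b * x)" if "u \<in> range (\<lambda>b. b * x)" "v \<in> range (\<lambda>b. b * x)"
      for u v
    proof -
      from that obtain p q where "u = p * x" "v = q * x" by blast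
      then show ?thesis using rangeI[of "\<lambda>b. b * x" "p + q"] by (simp add: distrib_right)
    qed
    show "scale c u \<in> range (\<lambda>b. b * x)" if "u \<in> range (\<lambda>b. b * x)" for c u
    proof -
      from that obtain p where "u = p * x" by blast
      then show ?thesis using rangeI[of "\<lambda>b. b * x" "scale c p"] by (simp add: scale_mult_left)
    qed
  qed
next
  fix a b c assume "\<forall>m\<ge>1. a ^ m \<in> range (\<lambda>b. b * x)"
  then obtain d where d: "a = d * x" by (metis imageE order_refl power_one_right)
  have "b * a ^ m * c = (b * c * d) * x" if "m \<ge> 1" for m
    using idempotent_ring_power[OF idem that] idempotent_ring_commute[OF idem, of a c] d
    by (simp add: mult.assoc)
  then show "\<exists>N. \<forall>m\<ge>N. b * a ^ m * c \<in> range (\<lambda>b. b * x)" by blast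
qed

lemma exists_nontrivial_two_sided_mathieu:
  assumes "scalars \<noteq> UNIV"
  shows "\<exists>W. two_sided_mathieu scale W \<and> 1 \<notin> W \<and> W \<noteq> {0}"
proof (cases "\<exists>x. x \<notin> scalars \<and> (x * x = 0 \<or> x * x \<notin> span {x})")
  case True
  then obtain x where x: "x \<notin> scalars" "x * x = 0 \<or> x * x \<notin> span {x}" by blast
  have "x \<in> span {x}" by (simp add: span_base)
  with not_scalar_imp_nonzero[OF x(1)] have "span {x} \<noteq> {0}" by auto
  with two_sided_mathieu_span_nonscalar[OF x] one_notin_span_nonscalar[OF x(1)] show ?thesis
    by (intro exI[of _ "span {x}"]) simp
next
  case False
  then have "\<forall>x. x \<notin> scalars \<longrightarrow> x * x \<in> span {x}" by blast
  note idem = idempotent_if_squares_in_span[OF this assms]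
  obtain x where x: "x \<notin> scalars" using assms by auto
  then have "x \<noteq> 1" using rangeI[of "\<lambda>c. scale c 1" 1] by auto
  have "x \<in> range (\<lambda>b. b * x)" using rangeI[of "\<lambda>b. b * x" 1] by simp
  with not_scalar_imp_nonzero[OF x] have "range (\<lambda>b. b * x) \<noteq> {0}" by auto
  with two_sided_mathieu_principal_left_ideal_idempotent[OF idem]
    one_notin_principal_left_ideal_idempotent[OF idem \<open>x \<noteq> 1\<close>]
  show ?thesis by (intro exI[of _ "range (\<lambda>b. b * x)"]) simp
qed

lemma two_sided_mathieu_zero: "two_sided_mathieu scale {0}"
  unfolding two_sided_mathieu_def
proof (intro conjI allI impI subspace_single_0)
  fix a b c :: 'a assume "\<forall>m\<ge>1. a ^ m \<in> {0}"
  then have "a = 0" by (drule_tac x = 1 in spec) simp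
  then show "\<exists>N. \<forall>m\<ge>N. b * a ^ m * c \<in> {0}" by (intro exI[of _ 1]) (simp add: power_0_left)
qed

lemma exists_maximal_mathieu_without_one:
  assumes "algebraic_over scale" and "mathieu t scale M" and "1 \<notin> M"
  obtains N where "mathieu t scale N" "1 \<notin> N" "M \<subseteq> N"
    and "\<forall>W. mathieu t scale W \<and> 1 \<notin> W \<and> N \<subseteq> W \<longrightarrow> W = N"
proof -
  define \<A> where "\<A> = {V. mathieu t scale V \<and> 1 \<notin> V \<and> M \<subseteq> V}"
  have "\<exists>N\<in>\<A>. \<forall>W\<in>\<A>. N \<subseteq> W \<longrightarrow> W = N"
  proof (rule subset_Zorn_nonempty)
    show "\<A> \<noteq> {}" using assms(2,3) unfolding \<A>_def by blast
    fix C assume "C \<noteq> {}" and chain: "subset.chain \<A> C"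
    then have members: "C \<subseteq> \<A>" and "subset.chain (Collect (mathieu t scale)) C"
      unfolding \<A>_def subset_chain_def by blast+
    with assms(1) \<open>C \<noteq> {}\<close> have "mathieu t scale (\<Union>C)" by (intro mathieu_Union_chain)
    moreover have "1 \<notin> \<Union>C" "M \<subseteq> \<Union>C" using members \<open>C \<noteq> {}\<close> unfolding \<A>_def by blast+
    ultimately show "\<Union>C \<in> \<A>" unfolding \<A>_def by blast
  qed
  then obtain N where "N \<in> \<A>" and "\<forall>W\<in>\<A>. N \<subseteq> W \<longrightarrow> W = N" by blast
  then show ?thesis by (intro that[of N]) (auto simp: \<A>_def)
qed

lemma exists_maximal_nontrivial_mathieu_superset:
  assumes "algebraic_over scale" and "scalars \<noteq> UNIV"
    and "mathieu t scale M" and "M \<noteq> UNIV"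
  shows "\<exists>N. maximal_nontrivial_mathieu t scale N \<and> M \<subseteq> N"
proof -
  have "1 \<notin> M" using assms(3,4) mathieu_UNIV_if_one by blast
  obtain N where N: "mathieu t scale N" "1 \<notin> N" "M \<subseteq> N"
    and max: "\<forall>W. mathieu t scale W \<and> 1 \<notin> W \<and> N \<subseteq> W \<longrightarrow> W = N"
    by (rule exists_maximal_mathieu_without_one[OF assms(1,3) \<open>1 \<notin> M\<close>])
  have "N \<noteq> {0}"
  proof
    assume "N = {0}"
    obtain W where W: "two_sided_mathieu scale W" "1 \<notin> W" "W \<noteq> {0}"
      using exists_nontrivial_two_sided_mathieu[OF assms(2)] by blast
    then have "N \<subseteq> W" using \<open>N = {0}\<close> subspace_0 by (auto simp: two_sided_mathieu_def)
    with W max two_sided_mathieu_imp_mathieu have "W = N" by blast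
    with \<open>N = {0}\<close> W(3) show False by blast
  qed
  moreover have "W = N" if "nontrivial_mathieu t scale W" "N \<subseteq> W" for W
    using that max mathieu_UNIV_if_one unfolding nontrivial_mathieu_def by blast
  ultimately have "maximal_nontrivial_mathieu t scale N"
    using N unfolding maximal_nontrivial_mathieu_def nontrivial_mathieu_def by blast
  with N(3) show ?thesis by blast
qed

end

theorem theorem4p21:
  fixes scale :: "'k::field \<Rightarrow> 'a::ring_1 \<Rightarrow> 'a"
    and t :: mathieu_type
  assumes "is_K_algebra scale"
    and "algebraic_over scale"
    and "range (\<lambda>c. scale c 1) \<noteq> UNIV"
  shows "(\<forall>M. mathieu t scale M \<and> M \<noteq> UNIV \<longrightarrow>
            (\<exists>N. maximal_nontrivial_mathieu t scale N \<and> M \<subseteq> N))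
       \<and> (\<exists>N. maximal_nontrivial_mathieu t scale N)"
proof -
  interpret K_algebra scale using assms(1) by (rule K_algebraI)
  have superset: "\<exists>N. maximal_nontrivial_mathieu t scale N \<and> M \<subseteq> N"
    if "mathieu t scale M" "M \<noteq> UNIV" for M
    using exists_maximal_nontrivial_mathieu_superset[OF assms(2,3) that] .
  have "mathieu t scale {0}" by (rule two_sided_mathieu_imp_mathieu[OF two_sided_mathieu_zero])
  moreover have "{0::'a} \<noteq> UNIV" by (metis UNIV_I singletonD zero_neq_one)
  ultimately have "\<exists>N. maximal_nontrivial_mathieu t scale N" using superset by blast
  with superset show ?thesis by simp
qed

end
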